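(* Let $\mathbf{M}$ be a $D\times D$ unimodular matrix and $\bm{\Gamma}_1,\dots,\bm{\Gamma}_L$ nonsingular $D\times D$ integer matrices that are pairwise commutative and coprime; let $\mathbf{M}_i=\mathbf{M}\bm{\Gamma}_i$. Then $\mathbf{R}=\mathbf{M}\bm{\Gamma}_1\cdots\bm{\Gamma}_L\mathbf{U}$ is an lcrm of the $\mathbf{M}_i$ for every unimodular $\mathbf{U}$; with $\mathbf{W}_i=\mathbf{M}\bm{\Gamma}_1\cdots\bm{\Gamma}_{i-1}\bm{\Gamma}_{i+1}\cdots\bm{\Gamma}_L$, there exist integer matrices $\widehat{\mathbf{W}}_i,\mathbf{Q}_i$ with $\mathbf{W}_i\widehat{\mathbf{W}}_i+\mathbf{M}_i\mathbf{Q}_i=\mathbf{I}$ for each $i$, and for any such choice every $\mathbf{m}\in\mathcal{N}(\mathbf{R})$ satisfies $$\mathbf{m}=\Big\langle\sum_{i=1}^L\mathbf{W}_i\widehat{\mathbf{W}}_i\mathbf{r}_i\Big\rangle_{\mathbf{R}},\qquad \mathbf{r}_i=\langle\mathbf{m}\rangle_{\mathbf{M}_i}.$$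
   Context: All matrices are $D\times D$ integer matrices; unimodular means integer with determinant $\pm1$. Commuting nonsingular integer matrices are coprime if all their common left (equivalently right) divisors are unimodular, where $\mathbf{A}$ is a left divisor of $\mathbf{M}$ if $\mathbf{A}^{-1}\mathbf{M}$ is integer. An lcrm of $\mathbf{M}_1,\dots,\mathbf{M}_L$ is a nonsingular integer $\mathbf{R}=\mathbf{M}_i\mathbf{P}_i$ (integer $\mathbf{P}_i$, all $i$) such that every such common right multiple equals $\mathbf{R}\mathbf{A}$ for integer $\mathbf{A}$. $\mathcal{N}(\mathbf{M})=\{\mathbf{k}\in\mathbb{Z}^D:\mathbf{k}=\mathbf{M}\mathbf{x},\ \mathbf{x}\in[0,1)^D\}$; $\langle\mathbf{m}\rangle_{\mathbf{M}}$ is the unique $\mathbf{r}\in\mathcal{N}(\mathbf{M})$ with $\mathbf{m}-\mathbf{r}\in\mathbf{M}\mathbb{Z}^D$. *)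

theory Defs
  imports "HOL-Analysis.Analysis"
begin

type_synonym 'n imat = "int ^'n ^'n"

definition unimodular :: "'n::finite imat \<Rightarrow> bool" where
  "unimodular A \<longleftrightarrow> det A = 1 \<or> det A = -1"

definition nonsingular :: "'n::finite imat \<Rightarrow> bool" where
  "nonsingular A \<longleftrightarrow> det A \<noteq> 0"

definition left_divisor :: "'n::finite imat \<Rightarrow> 'n imat \<Rightarrow> bool" where
  "left_divisor A M \<longleftrightarrow> nonsingular A \<and> (\<exists>P. M = A ** P)"

definition coprime_mat :: "'n::finite imat \<Rightarrow> 'n imat \<Rightarrow> bool" where
  "coprime_mat A B \<longleftrightarrow> (\<forall>C. left_divisor C A \<and> left_divisor C B \<longrightarrow> unimodular C)"

definition is_lcrm :: "'n::finite imat \<Rightarrow> (nat \<Rightarrow> 'n imat) \<Rightarrow> nat set \<Rightarrow> bool" where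
  "is_lcrm R Ms I \<longleftrightarrow> nonsingular R \<and> (\<forall>i\<in>I. \<exists>P. R = Ms i ** P) \<and>
     (\<forall>S. nonsingular S \<and> (\<forall>i\<in>I. \<exists>P. S = Ms i ** P) \<longrightarrow> (\<exists>A. S = R ** A))"

definition real_mat :: "'n::finite imat \<Rightarrow> real ^'n ^'n" where
  "real_mat A = (\<chi> i j. real_of_int (A $ i $ j))"

definition real_vec :: "int ^'n::finite \<Rightarrow> real ^'n" where
  "real_vec k = (\<chi> i. real_of_int (k $ i))"

definition NN :: "'n::finite imat \<Rightarrow> (int ^'n) set" where
  "NN M = {k. \<exists>x::real^'n. (\<forall>i. 0 \<le> x $ i \<and> x $ i < 1) \<and> real_vec k = real_mat M *v x}"

definition resid :: "int ^'n::finite \<Rightarrow> 'n imat \<Rightarrow> int ^'n" where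
  "resid m M = (THE r. r \<in> NN M \<and> (\<exists>z. m - r = M *v z))"

definition mprod :: "(nat \<Rightarrow> 'n::finite imat) \<Rightarrow> nat list \<Rightarrow> 'n imat" where
  "mprod G is = foldr (\<lambda>i A. G i ** A) is (mat 1)"

end

theory Submission
  imports Defs
begin

text \<open>
  Write A\<int>^D for the lattice spanned by the columns of an integer matrix A; then B = A P
  for an integer P iff B\<int>^D \<subseteq> A\<int>^D.
  If A and B are coprime, the submodule A\<int>^D + B\<int>^D contains (det B)\<int>^D,
  so it equals C\<int>^D for a nonsingular C; this C is a common left divisor of A and B, hence
  unimodular, and A X + B Y = I.  If moreover P and G commute, multiplication by P maps the finite
  residue set N(G) onto itself (as P X \<equiv> I modulo G), hence injectively, which gives
  P\<int>^D \<inter> G\<int>^D = P G\<int>^D.  By induction the lattices \<Gamma>_i\<int>^D intersect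
  in \<Gamma>_1\<cdots>\<Gamma>_L\<int>^D, so M \<Gamma>_1\<cdots>\<Gamma>_L U is an lcrm of the M \<Gamma>_i.
  The reconstruction formula is the Chinese remainder theorem: W_i Wh_i \<equiv> I modulo
  M_i and \<equiv> 0 modulo M_j for j \<noteq> i, so the sum is congruent to m modulo every
  M_i, hence modulo R.
\<close>

lemma real_mat_mult: "real_mat (A ** B) = real_mat A ** real_mat B"
  by (simp add: real_mat_def matrix_matrix_mult_def vec_eq_iff)

lemma real_mat_mat_1: "real_mat (mat 1) = mat 1"
  by (simp add: real_mat_def mat_def vec_eq_iff)

lemma real_mat_inject: "real_mat A = real_mat B \<longleftrightarrow> A = B"
  by (simp add: real_mat_def vec_eq_iff)

lemma det_real_mat: "det (real_mat A) = real_of_int (det A)"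
  by (simp add: det_def real_mat_def)

lemma real_vec_mult: "real_vec (A *v x) = real_mat A *v real_vec x"
  by (simp add: real_mat_def real_vec_def matrix_vector_mult_def vec_eq_iff)

lemma real_vec_inject: "real_vec x = real_vec y \<longleftrightarrow> x = y"
  by (simp add: real_vec_def vec_eq_iff)

lemma real_vec_diff: "real_vec (x - y) = real_vec x - real_vec y"
  by (simp add: real_vec_def vec_eq_iff)

lemma real_vec_smult: "real_vec (c *s x) = real_of_int c *s real_vec x"
  by (simp add: real_vec_def vec_eq_iff)

lemma matrix_vector_mult_smult: "(A::'a::comm_ring_1^'n^'m) *v (c *s x) = c *s (A *v x)"
  by (simp add: vector_scalar_mult_def matrix_vector_mult_def mult_ac sum_distrib_left vec_eq_iff)

lemma matrix_vector_mult_axis: "(A::'a::comm_ring_1^'n^'m) *v axis k 1 = column k A"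
  by (simp add: matrix_vector_mult_def axis_def column_def vec_eq_iff if_distrib cong: if_cong)

lemma mat_mult_vector: "mat c *v x = c *s x"
  by (simp add: vec_eq_iff matrix_vector_mult_def mat_def if_distrib if_distribR cong del: if_weak_cong)

lemma matrix_add_rdistrib: "(A + B) ** C = A ** C + B ** C"
  by (simp add: matrix_matrix_mult_def vec_eq_iff sum.distrib distrib_right)

lemma matrix_mult_columns: "A ** (\<chi> i k. x k $ i) = (\<chi> i k. (A *v x k) $ i)"
  by (simp add: matrix_matrix_mult_def matrix_vector_mult_def vec_eq_iff)

section \<open>Column lattices\<close>

definition lattice_of :: "'n::finite imat \<Rightarrow> (int ^'n) set" where
  "lattice_of A = range ((*v) A)"

lemma mem_lattice_of_iff: "v \<in> lattice_of A \<longleftrightarrow> (\<exists>z. v = A *v z)"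
  by (auto simp: lattice_of_def)

lemma lattice_ofI [simp, intro]: "A *v x \<in> lattice_of A"
  by (simp add: lattice_of_def)

lemma lattice_ofE [elim]:
  assumes "v \<in> lattice_of A"
  obtains x where "v = A *v x"
  using assms by (auto simp: lattice_of_def)

lemma lattice_of_mat_1 [simp]: "lattice_of (mat 1) = UNIV"
  by (simp add: lattice_of_def)

lemma lattice_of_zero [simp]: "0 \<in> lattice_of A"
  by (metis lattice_ofI matrix_vector_mult_0_right)

lemma lattice_of_add: "u \<in> lattice_of A \<Longrightarrow> v \<in> lattice_of A \<Longrightarrow> u + v \<in> lattice_of A"
  by (metis lattice_ofE lattice_ofI matrix_vector_right_distrib)

lemma lattice_of_diff: "u \<in> lattice_of A \<Longrightarrow> v \<in> lattice_of A \<Longrightarrow> u - v \<in> lattice_of A"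
  by (metis lattice_ofE lattice_ofI matrix_vector_mult_diff_distrib)

lemma lattice_of_uminus: "u \<in> lattice_of A \<Longrightarrow> - u \<in> lattice_of A"
  by (metis diff_0 lattice_of_diff lattice_of_zero)

lemma lattice_of_sum:
  "(\<And>i. i \<in> I \<Longrightarrow> f i \<in> lattice_of A) \<Longrightarrow> sum f I \<in> lattice_of A"
  by (induction I rule: infinite_finite_induct) (auto intro: lattice_of_add)

lemma lattice_of_mult_subset: "lattice_of (A ** B) \<subseteq> lattice_of A"
  by (metis image_subsetI lattice_ofI lattice_of_def matrix_vector_mul_assoc)

lemma left_multiple_iff_lattice_of_subset:
  "(\<exists>P. B = A ** P) \<longleftrightarrow> lattice_of B \<subseteq> lattice_of A"
proof
  assume "\<exists>P. B = A ** P"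
  then show "lattice_of B \<subseteq> lattice_of A" using lattice_of_mult_subset by blast
next
  assume "lattice_of B \<subseteq> lattice_of A"
  then have "\<forall>k. \<exists>x. column k B = A *v x"
    by (metis lattice_ofE lattice_ofI matrix_vector_mult_axis subsetD)
  then obtain x where x: "\<And>k. column k B = A *v x k" by metis
  have "B $ i $ k = column k B $ i" for i k by (simp add: column_def)
  then have "B = A ** (\<chi> i k. x k $ i)" by (simp add: matrix_mult_columns vec_eq_iff x)
  then show "\<exists>P. B = A ** P" ..
qed

lemma det_smult_in_lattice_of: "det A *s b \<in> lattice_of A"
proof (cases "det A = 0")
  case False
  let ?z = "\<chi> k. det (\<chi> i j. if j = k then b $ i else A $ i $ j)"
  have "invertible (real_mat A)" using False by (simp add: invertible_det_nz det_real_mat)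
  then obtain x where x: "real_mat A *v x = real_vec b"
    by (metis invertible_def matrix_vector_mul_assoc matrix_vector_mul_lid)
  have "real_of_int (?z $ k) = x $ k * det (real_mat A)" for k
  proof -
    have "real_mat (\<chi> i j. if j = k then b $ i else A $ i $ j)
        = (\<chi> i j. if j = k then (real_mat A *v x) $ i else real_mat A $ i $ j)"
      unfolding x by (simp add: real_mat_def real_vec_def vec_eq_iff)
    then show ?thesis by (simp flip: det_real_mat add: cramer_lemma)
  qed
  then have "real_vec ?z = det (real_mat A) *s x" by (simp add: real_vec_def vec_eq_iff)
  then have "real_vec (A *v ?z) = real_vec (det A *s b)"
    by (simp add: real_vec_mult real_vec_smult det_real_mat vector_scalar_commute x)
  then have "det A *s b = A *v ?z" by (simp add: real_vec_inject)
  then show ?thesis by simp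
qed simp

lemma unimodular_lattice_of_UNIV:
  assumes "unimodular A"
  shows "lattice_of A = UNIV"
proof -
  have "b = det A *s (det A *s b)" for b :: "int ^'n"
    using assms by (auto simp: unimodular_def)
  then show ?thesis by (metis UNIV_eq_I det_smult_in_lattice_of)
qed

lemma unimodular_invertible:
  assumes "unimodular A"
  shows "invertible A"
proof -
  obtain B where B: "mat 1 = A ** B"
    using assms unimodular_lattice_of_UNIV left_multiple_iff_lattice_of_subset by blast
  then have "real_mat B ** real_mat A = mat 1"
    by (metis matrix_left_right_inverse real_mat_mat_1 real_mat_mult)
  then have "B ** A = mat 1" by (metis real_mat_inject real_mat_mat_1 real_mat_mult)
  with B show ?thesis unfolding invertible_def by auto
qed

section \<open>Residues modulo a lattice\<close>

lemma real_mat_inverse: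
  assumes "det R \<noteq> 0"
  obtains R' where "R' ** real_mat R = mat 1" "real_mat R ** R' = mat 1"
  using assms invertible_det_nz[of "real_mat R"] unfolding invertible_def det_real_mat by auto

lemma NN_eq_if_diff_in_lattice_of:
  assumes "det R \<noteq> 0" "r \<in> NN R" "s \<in> NN R" "r - s \<in> lattice_of R"
  shows "r = s"
proof -
  obtain R' where R': "R' ** real_mat R = mat 1" using real_mat_inverse[OF assms(1)] by blast
  obtain x where x: "\<forall>i. 0 \<le> x $ i \<and> x $ i < 1" "real_vec r = real_mat R *v x"
    using assms(2) unfolding NN_def by blast
  obtain y where y: "\<forall>i. 0 \<le> y $ i \<and> y $ i < 1" "real_vec s = real_mat R *v y"
    using assms(3) unfolding NN_def by blast
  obtain z where z: "r - s = R *v z" using assms(4) by blast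
  have "real_mat R *v (x - y) = real_mat R *v real_vec z"
    using arg_cong[OF z, of real_vec] x y
    by (simp add: real_vec_diff real_vec_mult matrix_vector_mult_diff_distrib)
  then have "R' *v (real_mat R *v (x - y)) = R' *v (real_mat R *v real_vec z)" by simp
  then have "x - y = real_vec z" by (simp add: matrix_vector_mul_assoc R')
  then have "real_of_int (z $ i) = x $ i - y $ i" for i
    by (simp add: vec_eq_iff real_vec_def)
  then have "-1 < real_of_int (z $ i) \<and> real_of_int (z $ i) < 1" for i
    using x(1) y(1) by (smt (verit))
  then have "z $ i = 0" for i by (smt (verit) of_int_less_iff of_int_minus of_int_1)
  then have "z = 0" by (simp add: vec_eq_iff)
  then show ?thesis using z by simp
qed

lemma exists_NN_representative:
  assumes "det R \<noteq> 0"
  shows "\<exists>r \<in> NN R. m - r \<in> lattice_of R"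
proof -
  obtain R' where R': "real_mat R ** R' = mat 1" using real_mat_inverse[OF assms] by blast
  define x where "x = R' *v real_vec m"
  define z where "z = (\<chi> i. \<lfloor>x $ i\<rfloor>)"
  have "real_vec (m - R *v z) = real_mat R *v (x - real_vec z)"
    by (simp add: x_def real_vec_diff real_vec_mult matrix_vector_mult_diff_distrib
        matrix_vector_mul_assoc R')
  moreover have "\<forall>i. 0 \<le> (x - real_vec z) $ i \<and> (x - real_vec z) $ i < 1"
    by (simp add: z_def real_vec_def) linarith
  ultimately have "m - R *v z \<in> NN R" unfolding NN_def by blast
  then show ?thesis by force
qed

lemma ex1_NN_representative:
  assumes "det R \<noteq> 0"
  shows "\<exists>!r. r \<in> NN R \<and> m - r \<in> lattice_of R"
proof (rule ex_ex1I)
  fix r s assume "r \<in> NN R \<and> m - r \<in> lattice_of R" "s \<in> NN R \<and> m - s \<in> lattice_of R"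
  moreover have "r - s = (m - s) - (m - r)" by simp
  ultimately show "r = s" by (metis NN_eq_if_diff_in_lattice_of assms lattice_of_diff)
qed (use exists_NN_representative[OF assms] in blast)

lemma resid_in_NN: "det R \<noteq> 0 \<Longrightarrow> resid m R \<in> NN R"
  using theI'[OF ex1_NN_representative] unfolding resid_def mem_lattice_of_iff by blast

lemma diff_resid_in_lattice_of: "det R \<noteq> 0 \<Longrightarrow> m - resid m R \<in> lattice_of R"
  using theI'[OF ex1_NN_representative] unfolding resid_def mem_lattice_of_iff by blast

lemma resid_eqI:
  assumes "det R \<noteq> 0" "r \<in> NN R" "m - r \<in> lattice_of R"
  shows "resid m R = r"
proof -
  have "r - resid m R = (m - resid m R) - (m - r)" by simp
  then show ?thesis using assms resid_in_NN diff_resid_in_lattice_of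
    by (metis NN_eq_if_diff_in_lattice_of lattice_of_diff)
qed

lemma resid_eq_iff:
  assumes "det R \<noteq> 0"
  shows "resid u R = resid v R \<longleftrightarrow> u - v \<in> lattice_of R"
proof
  assume "resid u R = resid v R"
  then have "u - v = (u - resid u R) - (v - resid v R)" by simp
  then show "u - v \<in> lattice_of R" by (metis assms diff_resid_in_lattice_of lattice_of_diff)
next
  assume "u - v \<in> lattice_of R"
  then have "(u - v) + (v - resid v R) \<in> lattice_of R"
    using assms diff_resid_in_lattice_of lattice_of_add by blast
  then show "resid u R = resid v R" using resid_eqI[OF assms resid_in_NN[OF assms]] by simp
qed

lemma finite_bounded_int_vectors: "finite {k :: int ^'n::finite. \<forall>i. \<bar>k $ i\<bar> \<le> B i}"
proof (rule finite_subset)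
  show "{k. \<forall>i. \<bar>k $ i\<bar> \<le> B i} \<subseteq> vec_lambda ` PiE UNIV (\<lambda>i. {- B i..B i})"
  proof
    fix k :: "int ^'n" assume "k \<in> {k. \<forall>i. \<bar>k $ i\<bar> \<le> B i}"
    then have "vec_nth k \<in> PiE UNIV (\<lambda>i. {- B i..B i})" by (auto simp: abs_le_iff minus_le_iff)
    then show "k \<in> vec_lambda ` PiE UNIV (\<lambda>i. {- B i..B i})" by (metis image_eqI vec_nth_inverse)
  qed
qed (simp add: finite_PiE)

lemma finite_NN: "finite (NN R)"
proof (rule finite_subset)
  show "NN R \<subseteq> {k. \<forall>i. \<bar>k $ i\<bar> \<le> (\<Sum>j\<in>UNIV. \<bar>R $ i $ j\<bar>)}"
  proof (intro subsetI CollectI allI)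
    fix k i assume "k \<in> NN R"
    then obtain x where x: "\<forall>j. 0 \<le> x $ j \<and> x $ j < 1" "real_vec k = real_mat R *v x"
      unfolding NN_def by blast
    have "real_of_int (k $ i) = (\<Sum>j\<in>UNIV. real_of_int (R $ i $ j) * x $ j)"
      using arg_cong[OF x(2), of "\<lambda>v. v $ i"]
      by (simp add: real_vec_def real_mat_def matrix_vector_mult_def)
    also have "\<bar>\<dots>\<bar> \<le> (\<Sum>j\<in>UNIV. real_of_int \<bar>R $ i $ j\<bar>)"
    proof (rule order_trans[OF sum_abs sum_mono])
      fix j show "\<bar>real_of_int (R $ i $ j) * x $ j\<bar> \<le> real_of_int \<bar>R $ i $ j\<bar>"
        using x(1)[rule_format, of j] by (simp add: abs_mult mult_left_le)
    qed
    finally show "\<bar>k $ i\<bar> \<le> (\<Sum>j\<in>UNIV. \<bar>R $ i $ j\<bar>)"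
      by (simp flip: of_int_abs of_int_sum)
  qed
qed (rule finite_bounded_int_vectors)

lemma commuting_bezout_cancel:
  assumes comm: "P ** G = G ** P" and bezout: "P ** X + G ** Y = mat 1" and G: "det G \<noteq> 0"
    and "P *v x \<in> lattice_of G"
  shows "x \<in> lattice_of G"
proof -
  define f where "f r = resid (P *v r) G" for r
  have f_resid: "f (resid u G) = resid (P *v u) G" for u
  proof -
    obtain z where "u - resid u G = G *v z" using diff_resid_in_lattice_of[OF G] by (rule lattice_ofE)
    then have "P *v u - P *v resid u G = G *v (P *v z)"
      by (metis comm matrix_vector_mul_assoc matrix_vector_mult_diff_distrib)
    then show ?thesis unfolding f_def using resid_eq_iff[OF G] by (metis lattice_ofI)
  qed
  have "NN G \<subseteq> f ` NN G"
  proof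
    fix r assume r: "r \<in> NN G"
    have "r - P *v (X *v r) = (P ** X + G ** Y) *v r - (P ** X) *v r"
      by (simp add: bezout matrix_vector_mul_assoc)
    also have "\<dots> = G *v (Y *v r)"
      by (simp add: matrix_vector_mult_add_rdistrib matrix_vector_mul_assoc)
    finally have "- (r - P *v (X *v r)) \<in> lattice_of G" by (metis lattice_ofI lattice_of_uminus)
    then have "f (resid (X *v r) G) = r"
      unfolding f_resid using resid_eqI[OF G r] by simp
    then show "r \<in> f ` NN G" using resid_in_NN[OF G] by (metis image_eqI)
  qed
  then have "inj_on f (NN G)" by (rule finite_surj_inj[OF finite_NN])
  moreover have "f (resid x G) = f (resid 0 G)"
    unfolding f_resid using assms(4) resid_eq_iff[OF G] by simp
  ultimately have "resid x G = resid 0 G" using resid_in_NN[OF G] by (blast dest: inj_onD)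
  then show ?thesis using resid_eq_iff[OF G] by simp
qed

lemma commuting_bezout_lattice_of_Int:
  assumes "P ** G = G ** P" "P ** X + G ** Y = mat 1" "det G \<noteq> 0"
  shows "lattice_of P \<inter> lattice_of G \<subseteq> lattice_of (P ** G)"
proof
  fix v assume "v \<in> lattice_of P \<inter> lattice_of G"
  then obtain x y where v: "v = P *v x" "v = G *v y" by blast
  then have "P *v x \<in> lattice_of G" by (metis lattice_ofI)
  then have "x \<in> lattice_of G" by (rule commuting_bezout_cancel[OF assms])
  then obtain z where "x = G *v z" by blast
  then show "v \<in> lattice_of (P ** G)" by (metis v(1) lattice_ofI matrix_vector_mul_assoc)
qed

section \<open>Submodules of \<int>^D and Bezout identities\<close>

lemma int_ideal_principal:
  fixes T :: "int set"
  assumes diff: "\<And>s t. s \<in> T \<Longrightarrow> t \<in> T \<Longrightarrow> s - t \<in> T"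
    and mult: "\<And>c t. t \<in> T \<Longrightarrow> c * t \<in> T"
    and "t0 \<in> T" "t0 \<noteq> 0"
  obtains g where "g \<in> T" "\<And>t. t \<in> T \<Longrightarrow> g dvd t"
proof -
  define pos where "pos = {t \<in> T. 0 < t \<and> t \<le> \<bar>t0\<bar>}"
  have "\<bar>t0\<bar> \<in> T" using mult[OF \<open>t0 \<in> T\<close>, of "sgn t0"] by (simp add: abs_sgn mult.commute)
  then have "\<bar>t0\<bar> \<in> pos" using \<open>t0 \<noteq> 0\<close> by (simp add: pos_def)
  moreover have "finite pos" unfolding pos_def by (rule finite_subset[of _ "{0..\<bar>t0\<bar>}"]) auto
  ultimately have g: "Min pos \<in> pos" "\<And>t. t \<in> pos \<Longrightarrow> Min pos \<le> t"
    by (auto intro: Min_in)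
  have "Min pos dvd t" if "t \<in> T" for t
  proof -
    have "Min pos \<in> T" "0 < Min pos" "Min pos \<le> \<bar>t0\<bar>" using g(1) unfolding pos_def by auto
    then have "t - (t div Min pos) * Min pos \<in> T" using diff mult that by blast
    then have "t mod Min pos \<in> T" by (simp add: minus_div_mult_eq_mod)
    moreover have "0 \<le> t mod Min pos" "t mod Min pos < Min pos"
      using \<open>0 < Min pos\<close> by auto
    moreover have "t mod Min pos \<notin> pos" using g(2) \<open>t mod Min pos < Min pos\<close> by force
    ultimately have "t mod Min pos = 0" using \<open>Min pos \<le> \<bar>t0\<bar>\<close> unfolding pos_def by auto
    then show ?thesis by (simp add: dvd_eq_mod_eq_0)
  qed
  then show ?thesis using that g(1) unfolding pos_def by blast
qed

lemma int_submodule_spanning_family: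
  fixes S :: "(int ^'n::finite) set"
  assumes diff: "\<And>u v. u \<in> S \<Longrightarrow> v \<in> S \<Longrightarrow> u - v \<in> S"
    and smult: "\<And>c u. u \<in> S \<Longrightarrow> c *s u \<in> S"
    and full: "\<And>b. d *s b \<in> S" and "d \<noteq> 0"
    and "finite K"
  shows "\<exists>f. (\<forall>k. f k \<in> S) \<and> (\<forall>v\<in>S. (\<forall>i. i \<notin> K \<longrightarrow> v $ i = 0) \<longrightarrow> (\<exists>a. v = (\<Sum>k\<in>K. a k *s f k)))"
  using \<open>finite K\<close>
proof (induction K rule: finite_induct)
  case empty
  have "0 \<in> S" using full[of 0] by simp
  then show ?case by (auto simp: vec_eq_iff)
next
  case (insert j K)
  \<comment> \<open>the j-th entries of the vectors of S supported in insert j K form an ideal of \<int>; a vector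
    realising its generator is the new member of the family\<close>
  then obtain f where f: "\<forall>k. f k \<in> S"
    "\<forall>v\<in>S. (\<forall>i. i \<notin> K \<longrightarrow> v $ i = 0) \<longrightarrow> (\<exists>a. v = (\<Sum>k\<in>K. a k *s f k))" by blast
  define S' where "S' = {v \<in> S. \<forall>i. i \<notin> insert j K \<longrightarrow> v $ i = 0}"
  have S'_closed: "u - c *s v \<in> S'" if "u \<in> S'" "v \<in> S'" for u v c
    using that diff smult unfolding S'_def by auto
  have "d *s axis j 1 \<in> S'" using full unfolding S'_def by (auto simp: axis_def)
  obtain g where "g \<in> (\<lambda>v. v $ j) ` S'" and g_dvd: "\<And>t. t \<in> (\<lambda>v. v $ j) ` S' \<Longrightarrow> g dvd t"
  proof (rule int_ideal_principal[of "(\<lambda>v. v $ j) ` S'" "d"])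
    show "s - t \<in> (\<lambda>v. v $ j) ` S'" if "s \<in> (\<lambda>v. v $ j) ` S'" "t \<in> (\<lambda>v. v $ j) ` S'" for s t
      using that S'_closed[of _ _ 1] by force
    show "c * t \<in> (\<lambda>v. v $ j) ` S'" if "t \<in> (\<lambda>v. v $ j) ` S'" for c t
      using that S'_closed[of 0 _ "-c"] S'_closed[of _ _ 1] by force
  qed (use \<open>d *s axis j 1 \<in> S'\<close> \<open>d \<noteq> 0\<close> in force)+
  then obtain c where c: "c \<in> S'" "c $ j = g" by blast
  have "\<exists>a. v = (\<Sum>k\<in>insert j K. a k *s (f(j := c)) k)"
    if "v \<in> S" "\<forall>i. i \<notin> insert j K \<longrightarrow> v $ i = 0" for v
  proof -
    have "v \<in> S'" using that unfolding S'_def by blast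
    then obtain t where t: "v $ j = g * t" using g_dvd by blast
    have "v - t *s c \<in> S'" using S'_closed[OF \<open>v \<in> S'\<close> c(1)] .
    moreover have "(v - t *s c) $ j = 0" using t c(2) by simp
    ultimately have "v - t *s c \<in> S" "\<forall>i. i \<notin> K \<longrightarrow> (v - t *s c) $ i = 0"
      unfolding S'_def by auto
    then obtain a where "v - t *s c = (\<Sum>k\<in>K. a k *s f k)" using f(2) by blast
    then have "v = (\<Sum>k\<in>insert j K. (a(j := t)) k *s (f(j := c)) k)"
      using insert.hyps by (simp add: algebra_simps) (auto intro: sum.cong)
    then show ?thesis by blast
  qed
  moreover have "\<forall>k. (f(j := c)) k \<in> S" using f(1) c(1) unfolding S'_def by simp
  ultimately show ?case by blast
qed

lemma int_submodule_eq_lattice_of: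
  fixes S :: "(int ^'n::finite) set"
  assumes diff: "\<And>u v. u \<in> S \<Longrightarrow> v \<in> S \<Longrightarrow> u - v \<in> S"
    and smult: "\<And>c u. u \<in> S \<Longrightarrow> c *s u \<in> S"
    and full: "\<And>b. d *s b \<in> S" and "d \<noteq> 0"
  obtains C where "det C \<noteq> 0" "S = lattice_of C"
proof -
  obtain f :: "'n \<Rightarrow> int ^'n" where f: "\<forall>k. f k \<in> S" "\<forall>v\<in>S. \<exists>a. v = (\<Sum>k\<in>UNIV. a k *s f k)"
    using int_submodule_spanning_family[OF diff smult full \<open>d \<noteq> 0\<close> finite[of UNIV]] by auto
  define C where "C = (\<chi> i k. f k $ i)"
  have C_mult: "C *v x = (\<Sum>k\<in>UNIV. x $ k *s f k)" for x
    unfolding matrix_mult_sum by (simp add: C_def column_def)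
  have "(\<Sum>k\<in>K. x $ k *s f k) \<in> S" for x K
  proof (induction K rule: infinite_finite_induct)
    case (insert k K)
    have "x $ k *s f k - (-1) *s (\<Sum>k\<in>K. x $ k *s f k) \<in> S"
      using diff smult f(1) insert.IH by blast
    moreover have "(-1) *s v = - v" for v :: "int ^'n" by (simp add: vec_eq_iff)
    ultimately show ?case using insert.hyps by simp
  qed (use full[of 0] in simp_all)
  then have "lattice_of C \<subseteq> S" unfolding C_mult lattice_of_def by auto
  moreover have "S \<subseteq> lattice_of C"
  proof
    fix v assume "v \<in> S"
    then obtain a where "v = (\<Sum>k\<in>UNIV. a k *s f k)" using f(2) by blast
    then have "v = C *v (\<chi> k. a k)" unfolding C_mult by simp
    then show "v \<in> lattice_of C" by blast
  qed
  ultimately have "S = lattice_of C" by (rule subset_antisym[rotated])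
  then have "lattice_of (mat d) \<subseteq> lattice_of C"
    using full by (auto simp: lattice_of_def mat_mult_vector)
  then obtain P where "mat d = C ** P" using left_multiple_iff_lattice_of_subset by blast
  moreover have "det (mat d :: 'n imat) = d ^ CARD('n)" by (simp add: det_diagonal mat_def)
  ultimately have "det C * det P \<noteq> 0" using \<open>d \<noteq> 0\<close> by (metis det_mul power_not_zero)
  then show ?thesis using that \<open>S = lattice_of C\<close> by auto
qed

lemma lattice_sum_eq_lattice_of:
  assumes "det B \<noteq> 0"
  obtains C where "det C \<noteq> 0" "{A *v x + B *v y | x y. True} = lattice_of C"
proof -
  define S where "S = {A *v x + B *v y | x y. True}"
  have diff: "u - v \<in> S" if "u \<in> S" "v \<in> S" for u v
  proof -
    from that obtain x y x' y' where "u = A *v x + B *v y" "v = A *v x' + B *v y'"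
      unfolding S_def by blast
    then have "u - v = A *v (x - x') + B *v (y - y')" by (simp add: matrix_vector_mult_diff_distrib)
    then show ?thesis unfolding S_def by blast
  qed
  have smult: "c *s u \<in> S" if "u \<in> S" for c u
  proof -
    from that obtain x y where "u = A *v x + B *v y" unfolding S_def by blast
    then have "c *s u = A *v (c *s x) + B *v (c *s y)"
      by (simp add: matrix_vector_mult_smult vector_add_ldistrib)
    then show ?thesis unfolding S_def by blast
  qed
  have full: "det B *s b \<in> S" for b
  proof -
    obtain z where "det B *s b = B *v z" using det_smult_in_lattice_of[of B b] by (rule lattice_ofE)
    then have "det B *s b = A *v 0 + B *v z" by simp
    then show ?thesis unfolding S_def by blast
  qed
  obtain C where "det C \<noteq> 0" "S = lattice_of C"
    by (rule int_submodule_eq_lattice_of[OF diff smult full assms])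
  then show ?thesis using that unfolding S_def by blast
qed

lemma coprime_mat_bezout:
  assumes "coprime_mat A B" "nonsingular B"
  obtains X Y where "A ** X + B ** Y = mat 1"
proof -
  have "det B \<noteq> 0" using assms(2) by (simp add: nonsingular_def)
  then obtain C where C: "det C \<noteq> 0" and S: "{A *v x + B *v y | x y. True} = lattice_of C"
    by (rule lattice_sum_eq_lattice_of)
  have "A *v x = A *v x + B *v 0" "B *v x = A *v 0 + B *v x" for x by simp_all
  then have "lattice_of A \<subseteq> {A *v x + B *v y | x y. True}" "lattice_of B \<subseteq> {A *v x + B *v y | x y. True}"
    unfolding lattice_of_def by blast+
  then have "lattice_of A \<subseteq> lattice_of C" "lattice_of B \<subseteq> lattice_of C" unfolding S .
  then have "unimodular C" using assms(1) C
    by (simp add: coprime_mat_def left_divisor_def nonsingular_def left_multiple_iff_lattice_of_subset)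
  then have "{A *v x + B *v y | x y. True} = UNIV" unfolding S by (rule unimodular_lattice_of_UNIV)
  then have "axis k 1 \<in> {A *v x + B *v y | x y. True}" for k by simp
  then have "\<forall>k. \<exists>x y. axis k 1 = A *v x + B *v y" by blast
  then obtain x y where xy: "\<And>k. axis k 1 = A *v x k + B *v y k" by metis
  have "(A ** (\<chi> i k. x k $ i) + B ** (\<chi> i k. y k $ i)) $ i $ k = mat 1 $ i $ k" for i k
    using arg_cong[OF xy[of k], of "\<lambda>v. v $ i"] by (simp add: matrix_mult_columns axis_def mat_def)
  then have "A ** (\<chi> i k. x k $ i) + B ** (\<chi> i k. y k $ i) = mat 1" by (simp add: vec_eq_iff)
  then show ?thesis using that by blast
qed

section \<open>Products of commuting coprime matrices\<close>

lemma mprod_Nil [simp]: "mprod G [] = mat 1"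
  by (simp add: mprod_def)

lemma mprod_Cons [simp]: "mprod G (i # is) = G i ** mprod G is"
  by (simp add: mprod_def)

lemma mprod_commute:
  "(\<And>j. j \<in> set is \<Longrightarrow> A ** G j = G j ** A) \<Longrightarrow> A ** mprod G is = mprod G is ** A"
proof (induction "is")
  case (Cons j "is")
  then have "A ** (G j ** mprod G is) = G j ** (mprod G is ** A)"
    by (metis list.set_intros matrix_mul_assoc)
  then show ?case by (simp add: matrix_mul_assoc)
qed simp

locale commuting_coprime_family =
  fixes G :: "nat \<Rightarrow> 'n::finite imat" and I :: "nat set"
  assumes nonsingular: "i \<in> I \<Longrightarrow> det (G i) \<noteq> 0"
    and commute: "i \<in> I \<Longrightarrow> j \<in> I \<Longrightarrow> i \<noteq> j \<Longrightarrow> G i ** G j = G j ** G i"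
    and coprime: "i \<in> I \<Longrightarrow> j \<in> I \<Longrightarrow> i \<noteq> j \<Longrightarrow> coprime_mat (G i) (G j)"
begin

lemma det_mprod_nonzero: "set is \<subseteq> I \<Longrightarrow> det (mprod G is) \<noteq> 0"
  by (induction "is") (auto simp: det_mul nonsingular)

lemma mprod_extract:
  assumes "distinct is" "i \<in> set is" "set is \<subseteq> I"
  shows "mprod G is = G i ** mprod G (filter (\<lambda>j. j \<noteq> i) is)"
  using assms
proof (induction "is")
  case (Cons j "is")
  show ?case
  proof (cases "j = i")
    case True
    with Cons.prems have "filter (\<lambda>j. j \<noteq> i) is = is" by (auto intro: filter_True)
    with True show ?thesis by simp
  next
    case False
    with Cons have "mprod G is = G i ** mprod G (filter (\<lambda>j. j \<noteq> i) is)" by simp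
    moreover have "G j ** G i = G i ** G j" using Cons.prems commute by auto
    ultimately show ?thesis using False by (simp add: matrix_mul_assoc)
  qed
qed simp

lemma bezout_mprod:
  assumes "i \<in> I" "i \<notin> set is" "set is \<subseteq> I"
  shows "\<exists>X Y. G i ** X + mprod G is ** Y = mat 1"
  using assms(2,3)
proof (induction "is")
  case Nil
  show ?case by (rule exI[of _ 0], rule exI[of _ "mat 1"]) simp
next
  case (Cons j "is")
  then obtain X Y where XY: "G i ** X + mprod G is ** Y = mat 1" by auto
  have "coprime_mat (G i) (G j)" "nonsingular (G j)"
    using Cons.prems assms(1) coprime nonsingular by (auto simp: nonsingular_def)
  then obtain X' Y' where XY': "G i ** X' + G j ** Y' = mat 1" by (rule coprime_mat_bezout)
  have ji: "G j ** G i = G i ** G j" using Cons.prems assms(1) commute by auto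
  have "mat 1 = G i ** X' + G j ** ((G i ** X + mprod G is ** Y) ** Y')"
    using XY XY' by simp
  also have "\<dots> = G i ** X' + (G j ** G i) ** (X ** Y') + (G j ** mprod G is) ** (Y ** Y')"
    by (simp add: matrix_add_ldistrib matrix_add_rdistrib matrix_mul_assoc add.assoc)
  also have "\<dots> = G i ** (X' + G j ** X ** Y') + mprod G (j # is) ** (Y ** Y')"
    by (simp add: ji matrix_add_ldistrib matrix_mul_assoc)
  finally show ?case by (metis (no_types))
qed

lemma Inter_lattice_of_subset_mprod:
  assumes "distinct is" "set is \<subseteq> I"
  shows "(\<Inter>i\<in>set is. lattice_of (G i)) \<subseteq> lattice_of (mprod G is)"
  using assms
proof (induction "is")
  case (Cons i "is")
  have "G i ** mprod G is = mprod G is ** G i"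
    using Cons.prems commute by (intro mprod_commute) auto
  moreover obtain X Y where "G i ** X + mprod G is ** Y = mat 1"
    using Cons.prems bezout_mprod[of i "is"] by auto
  moreover have "det (mprod G is) \<noteq> 0" using Cons.prems det_mprod_nonzero by simp
  ultimately have "lattice_of (G i) \<inter> lattice_of (mprod G is) \<subseteq> lattice_of (G i ** mprod G is)"
    by (rule commuting_bezout_lattice_of_Int)
  with Cons show ?case by auto
qed simp

end

section \<open>Least common right multiples and reconstruction\<close>

lemma lattice_of_mult_unimodular:
  assumes "unimodular U"
  shows "lattice_of (A ** U) = lattice_of A"
proof
  obtain U' where "U ** U' = mat 1" using assms unimodular_invertible invertible_def by blast
  then have "A = (A ** U) ** U'" by (simp flip: matrix_mul_assoc)
  then show "lattice_of A \<subseteq> lattice_of (A ** U)" by (metis lattice_of_mult_subset)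
qed (rule lattice_of_mult_subset)

lemma Inter_lattice_of_mult_left_subset:
  assumes "invertible M" "(\<Inter>i\<in>I. lattice_of (A i)) \<subseteq> lattice_of B"
  shows "(\<Inter>i\<in>I. lattice_of (M ** A i)) \<subseteq> lattice_of (M ** B)"
proof
  obtain M' where M': "M ** M' = mat 1" "M' ** M = mat 1" using assms(1) invertible_def by blast
  fix v assume v: "v \<in> (\<Inter>i\<in>I. lattice_of (M ** A i))"
  have "M' *v v \<in> lattice_of (A i)" if "i \<in> I" for i
  proof -
    have "v \<in> lattice_of (M ** A i)" using v that by blast
    then obtain z where "v = (M ** A i) *v z" by (rule lattice_ofE)
    then have "M' *v v = A i *v z" by (simp add: matrix_vector_mul_assoc matrix_mul_assoc M'(2))
    then show ?thesis by simp
  qed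
  then have "M' *v v \<in> lattice_of B" using assms(2) by blast
  then obtain z where "M' *v v = B *v z" by (rule lattice_ofE)
  then have "v = (M ** B) *v z" by (metis M'(1) matrix_vector_mul_assoc matrix_vector_mul_lid)
  then show "v \<in> lattice_of (M ** B)" by simp
qed

lemma is_lcrmI:
  fixes R :: "'n::finite imat"
  assumes "nonsingular R" "\<And>i. i \<in> I \<Longrightarrow> \<exists>P. R = Ms i ** P"
    and "(\<Inter>i\<in>I. lattice_of (Ms i)) \<subseteq> lattice_of R"
  shows "is_lcrm R Ms I"
proof -
  have "\<exists>A. S = R ** A" if "\<forall>i\<in>I. \<exists>P. S = Ms i ** P" for S :: "'n imat"
  proof -
    have "lattice_of S \<subseteq> lattice_of (Ms i)" if "i \<in> I" for i
      using \<open>\<forall>i\<in>I. \<exists>P. S = Ms i ** P\<close> that left_multiple_iff_lattice_of_subset by blast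
    then have "lattice_of S \<subseteq> lattice_of R" using assms(3) by blast
    then show ?thesis by (rule left_multiple_iff_lattice_of_subset[THEN iffD2])
  qed
  then show ?thesis using assms(1,2) unfolding is_lcrm_def by blast
qed

lemma resid_crt_reconstruction:
  fixes R :: "'n::finite imat" and Ms E Q :: "nat \<Rightarrow> 'n imat"
  assumes "finite I" and R: "det R \<noteq> 0"
    and crt: "(\<Inter>i\<in>I. lattice_of (Ms i)) \<subseteq> lattice_of R"
    and Ms: "\<And>i. i \<in> I \<Longrightarrow> det (Ms i) \<noteq> 0"
    and unit: "\<And>i. i \<in> I \<Longrightarrow> E i + Ms i ** Q i = mat 1"
    and vanish: "\<And>i j. i \<in> I \<Longrightarrow> j \<in> I \<Longrightarrow> i \<noteq> j \<Longrightarrow> lattice_of (E i) \<subseteq> lattice_of (Ms j)"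
    and m: "m \<in> NN R"
  shows "m = resid (\<Sum>i\<in>I. E i *v resid m (Ms i)) R"
proof -
  define r where "r i = resid m (Ms i)" for i
  define s where "s = (\<Sum>i\<in>I. E i *v r i)"
  have "s - m \<in> lattice_of (Ms j)" if j: "j \<in> I" for j
  proof -
    have "E j = mat 1 - Ms j ** Q j" using unit[OF j] by (simp add: eq_diff_eq)
    then have "E j *v r j = r j - Ms j *v (Q j *v r j)"
      by (simp add: matrix_vector_mult_diff_rdistrib matrix_vector_mul_assoc)
    then have s_m: "s - m = (r j - m) - Ms j *v (Q j *v r j) + (\<Sum>i\<in>I - {j}. E i *v r i)"
      unfolding s_def sum.remove[OF \<open>finite I\<close> j] by (simp add: algebra_simps)
    have rj: "r j - m \<in> lattice_of (Ms j)"
      using diff_resid_in_lattice_of[OF Ms[OF j], THEN lattice_of_uminus] unfolding r_def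
      by simp
    have Ei: "E i *v r i \<in> lattice_of (Ms j)" if "i \<in> I - {j}" for i
      using vanish[of i j] that j lattice_ofI by blast
    show ?thesis
      unfolding s_m by (intro lattice_of_add[OF lattice_of_diff[OF rj lattice_ofI]] lattice_of_sum Ei)
  qed
  then have "s - m \<in> lattice_of R" using crt by blast
  then show ?thesis using resid_eqI[OF R m] unfolding s_def r_def by simp
qed

context commuting_coprime_family
begin

lemma Inter_lattice_of_left_mult_subset_mprod:
  assumes "unimodular M" "unimodular U" "distinct is" "set is = I"
  shows "(\<Inter>i\<in>I. lattice_of (M ** G i)) \<subseteq> lattice_of (M ** mprod G is ** U)"
proof -
  have "(\<Inter>i\<in>I. lattice_of (G i)) \<subseteq> lattice_of (mprod G is)"
    using Inter_lattice_of_subset_mprod assms(3,4) by auto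
  then have "(\<Inter>i\<in>I. lattice_of (M ** G i)) \<subseteq> lattice_of (M ** mprod G is)"
    by (rule Inter_lattice_of_mult_left_subset[OF unimodular_invertible[OF assms(1)]])
  then show ?thesis using lattice_of_mult_unimodular[OF assms(2)] by simp
qed

lemma is_lcrm_mprod:
  assumes M: "unimodular M" and U: "unimodular U" and "is": "distinct is" "set is = I"
  shows "is_lcrm (M ** mprod G is ** U) (\<lambda>i. M ** G i) I"
proof (rule is_lcrmI)
  show "nonsingular (M ** mprod G is ** U)"
    using M U det_mprod_nonzero "is" by (auto simp: nonsingular_def unimodular_def det_mul)
  show "\<exists>P. M ** mprod G is ** U = (M ** G i) ** P" if "i \<in> I" for i
  proof -
    have "mprod G is = G i ** mprod G (filter (\<lambda>j. j \<noteq> i) is)"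
      using mprod_extract[of "is" i] "is" that by simp
    then have "M ** mprod G is ** U = (M ** G i) ** (mprod G (filter (\<lambda>j. j \<noteq> i) is) ** U)"
      by (simp add: matrix_mul_assoc)
    then show ?thesis by blast
  qed
qed (rule Inter_lattice_of_left_mult_subset_mprod[OF assms])

lemma bezout_cofactor:
  assumes M: "unimodular M" and i: "i \<in> I" and "is": "distinct is" "set is = I"
  shows "\<exists>Wh Q. (M ** mprod G (filter (\<lambda>j. j \<noteq> i) is)) ** Wh + (M ** G i) ** Q = mat 1"
proof -
  let ?P = "mprod G (filter (\<lambda>j. j \<noteq> i) is)"
  obtain X Y where XY: "G i ** X + ?P ** Y = mat 1"
    using bezout_mprod[of i "filter (\<lambda>j. j \<noteq> i) is"] i "is" by auto
  obtain M' where M': "M ** M' = mat 1" using M unimodular_invertible invertible_def by blast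
  have "(M ** ?P) ** (Y ** M') + (M ** G i) ** (X ** M') = M ** (G i ** X + ?P ** Y) ** M'"
    by (simp add: matrix_add_ldistrib matrix_add_rdistrib matrix_mul_assoc add.commute)
  also have "\<dots> = mat 1" by (simp add: XY M')
  finally show ?thesis by blast
qed

lemma resid_reconstruction_mprod:
  assumes M: "unimodular M" and U: "unimodular U" and "is": "distinct is" "set is = I"
    and bezout: "\<And>i. i \<in> I \<Longrightarrow>
      (M ** mprod G (filter (\<lambda>j. j \<noteq> i) is)) ** Wh i + (M ** G i) ** Q i = mat 1"
    and m: "m \<in> NN (M ** mprod G is ** U)"
  shows "m = resid (\<Sum>i\<in>I. ((M ** mprod G (filter (\<lambda>j. j \<noteq> i) is)) ** Wh i)
                              *v resid m (M ** G i)) (M ** mprod G is ** U)"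
proof (rule resid_crt_reconstruction[where Ms = "\<lambda>i. M ** G i" and Q = Q and
      E = "\<lambda>i. (M ** mprod G (filter (\<lambda>j. j \<noteq> i) is)) ** Wh i"])
  show "(\<Inter>i\<in>I. lattice_of (M ** G i)) \<subseteq> lattice_of (M ** mprod G is ** U)"
    by (rule Inter_lattice_of_left_mult_subset_mprod[OF assms(1-4)])
  show "finite I" using "is" by auto
  show "det (M ** mprod G is ** U) \<noteq> 0"
    using is_lcrm_mprod[OF assms(1-4)] by (simp add: is_lcrm_def nonsingular_def)
  show "det (M ** G i) \<noteq> 0" if "i \<in> I" for i
    using M nonsingular[OF that] by (auto simp: unimodular_def det_mul)
  show "lattice_of ((M ** mprod G (filter (\<lambda>k. k \<noteq> i) is)) ** Wh i) \<subseteq> lattice_of (M ** G j)"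
    if "i \<in> I" "j \<in> I" "i \<noteq> j" for i j
  proof -
    let ?rest = "mprod G (filter (\<lambda>k. k \<noteq> j) (filter (\<lambda>k. k \<noteq> i) is))"
    have "mprod G (filter (\<lambda>k. k \<noteq> i) is) = G j ** ?rest"
      using mprod_extract[of "filter (\<lambda>k. k \<noteq> i) is" j] that "is" by auto
    then have "(M ** mprod G (filter (\<lambda>k. k \<noteq> i) is)) ** Wh i = (M ** G j) ** (?rest ** Wh i)"
      by (simp add: matrix_mul_assoc)
    then show ?thesis by (metis lattice_of_mult_subset)
  qed
qed (simp_all add: bezout m)

end

theorem corollary3:
  fixes M :: "'n::finite imat" and G :: "nat \<Rightarrow> 'n imat" and L :: nat
  assumes L: "L \<ge> 1"
    and M: "unimodular M"
    and nonsing: "\<forall>i\<in>{1..L}. nonsingular (G i)"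
    and comm: "\<forall>i\<in>{1..L}. \<forall>j\<in>{1..L}. i \<noteq> j \<longrightarrow> G i ** G j = G j ** G i"
    and copr: "\<forall>i\<in>{1..L}. \<forall>j\<in>{1..L}. i \<noteq> j \<longrightarrow> coprime_mat (G i) (G j)"
  shows
   "(\<forall>U. unimodular U \<longrightarrow>
        is_lcrm (M ** mprod G [1..<L+1] ** U) (\<lambda>i. M ** G i) {1..L})
    \<and> (\<forall>i\<in>{1..L}. \<exists>Wh Q. (M ** mprod G (filter (\<lambda>j. j \<noteq> i) [1..<L+1])) ** Wh
                              + (M ** G i) ** Q = mat 1)
    \<and> (\<forall>Wh Q. (\<forall>i\<in>{1..L}. (M ** mprod G (filter (\<lambda>j. j \<noteq> i) [1..<L+1])) ** Wh i
                              + (M ** G i) ** Q i = mat 1) \<longrightarrow>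
        (\<forall>U. unimodular U \<longrightarrow>
          (\<forall>m \<in> NN (M ** mprod G [1..<L+1] ** U).
             m = resid (\<Sum>i\<in>{1..L}. ((M ** mprod G (filter (\<lambda>j. j \<noteq> i) [1..<L+1])) ** Wh i)
                                        *v resid m (M ** G i))
                       (M ** mprod G [1..<L+1] ** U))))"
proof -
  interpret commuting_coprime_family G "{1..L}"
    using nonsing comm copr by unfold_locales (auto simp: nonsingular_def)
  have "is": "distinct [1..<L+1]" "set [1..<L+1] = {1..L}" by auto
  show ?thesis
    using is_lcrm_mprod[OF M _ "is"] bezout_cofactor[OF M _ "is"] resid_reconstruction_mprod[OF M _ "is"]
    by blast
qed

end
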